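(* Let $G=(V,E)$ be a finite graph with positive edge weights $(\theta_e)$, let $z>0$, let $\mathbf{y}(z)\in(0,\infty)^{\vec E}$ be the (unique) solution of $\mathbf{y}(z)=z\mathcal{R}_G(\mathbf{y}(z))$, and define for each edge $e$ with orientations $\vec e,-\vec e$ \[ x_e(z)=\frac{\theta_e y_{\vec e}(z)y_{-\vec e}(z)}{z+\theta_e y_{\vec e}(z)y_{-\vec e}(z)}. \] Then for every edge $e=(uv)\in E$, \[ \frac{x_e(z)(1-x_e(z))}{z}= \theta_e\Big(1-\sum_{e'\in \partial u}x_{e'}(z)\Big)\Big(1-\sum_{e'\in \partial v}x_{e'}(z)\Big). \]
   Context: $\vec E$ contains the two orientations $u\to v$, $v\to u$ of each edge $uv$. $\mathcal{R}_G(\mathbf{a})_{u\to v}=(1+\sum_{w\in\partial u\setminus v}\theta_{wu}a_{w\to u})^{-1}$, where $\partial u\setminus v$ is the set of neighbours of $u$ other than $v$ and empty sums are $0$; $z\mathcal{R}_G$ multiplies each component by $z$. $\partial u$ denotes the set of edges incident to $u$. *)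

theory Defs
  imports "HOL-Analysis.Analysis"
begin

text \<open>A finite simple graph on vertex set V with symmetric irreflexive adjacency relation adj.
  Oriented edges u -> v are pairs (u,v) with adj u v. Edge weights theta u v (symmetric).\<close>

definition simple_graph :: "'a set \<Rightarrow> ('a \<Rightarrow> 'a \<Rightarrow> bool) \<Rightarrow> bool" where
  "simple_graph V adj \<longleftrightarrow> finite V \<and> (\<forall>u v. adj u v \<longrightarrow> u \<in> V \<and> v \<in> V)
     \<and> (\<forall>u v. adj u v \<longrightarrow> adj v u) \<and> (\<forall>u. \<not> adj u u)"

definition nbrs :: "('a \<Rightarrow> 'a \<Rightarrow> bool) \<Rightarrow> 'a \<Rightarrow> 'a set" where
  "nbrs adj u = {w. adj u w}"

definition RG :: "('a \<Rightarrow> 'a \<Rightarrow> bool) \<Rightarrow> ('a \<Rightarrow> 'a \<Rightarrow> real) \<Rightarrow> ('a \<times> 'a \<Rightarrow> real) \<Rightarrow> 'a \<times> 'a \<Rightarrow> real" where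
  "RG adj \<theta> a = (\<lambda>(u, v). inverse (1 + (\<Sum>w \<in> nbrs adj u - {v}. \<theta> w u * a (w, u))))"

definition xe :: "('a \<Rightarrow> 'a \<Rightarrow> real) \<Rightarrow> ('a \<times> 'a \<Rightarrow> real) \<Rightarrow> real \<Rightarrow> 'a \<Rightarrow> 'a \<Rightarrow> real" where
  "xe \<theta> y z u v = \<theta> u v * y (u, v) * y (v, u) / (z + \<theta> u v * y (u, v) * y (v, u))"

end

theory Submission
  imports Defs
begin

text \<open>Let \<open>S u = (\<Sum>w \<in> \<partial>u. \<theta> w u * y (w, u))\<close>. The fixed point equation reads
  \<open>z / y (u, v) = 1 + S u - \<theta> v u * y (v, u)\<close>; substituting it into \<open>x u v\<close> gives
  \<open>x u v = \<theta> v u * y (v, u) / (1 + S u)\<close> and \<open>1 - x u v = z / (y (u, v) * (1 + S u))\<close>,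
  and by symmetry of \<open>x\<close> also \<open>x u v = \<theta> u v * y (u, v) / (1 + S v)\<close>. Summing the first form
  over \<open>\<partial>u\<close> gives \<open>1 - (\<Sum>w \<in> \<partial>u. x u w) = 1 / (1 + S u)\<close>, so both sides of the
  identity equal \<open>\<theta> u v / ((1 + S u) * (1 + S v))\<close>.\<close>

definition message_sum :: "('a \<Rightarrow> 'a \<Rightarrow> bool) \<Rightarrow> ('a \<Rightarrow> 'a \<Rightarrow> real) \<Rightarrow> ('a \<times> 'a \<Rightarrow> real) \<Rightarrow> 'a \<Rightarrow> real"
  where "message_sum adj \<theta> y u = (\<Sum>w \<in> nbrs adj u. \<theta> w u * y (w, u))"

lemma finite_nbrs:
  assumes "simple_graph V adj"
  shows "finite (nbrs adj u)"
proof (rule finite_subset)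
  show "nbrs adj u \<subseteq> V" using assms by (auto simp: simple_graph_def nbrs_def)
  show "finite V" using assms by (simp add: simple_graph_def)
qed

locale weighted_fixed_point =
  fixes V :: "'a set" and adj :: "'a \<Rightarrow> 'a \<Rightarrow> bool" and \<theta> :: "'a \<Rightarrow> 'a \<Rightarrow> real"
    and y :: "'a \<times> 'a \<Rightarrow> real" and z :: real
  assumes graph: "simple_graph V adj"
    and \<theta>_sym: "\<And>a b. adj a b \<Longrightarrow> \<theta> a b = \<theta> b a"
    and \<theta>_pos: "\<And>a b. adj a b \<Longrightarrow> \<theta> a b > 0"
    and z_pos: "z > 0"
    and y_pos: "\<And>a b. adj a b \<Longrightarrow> y (a, b) > 0"
    and y_fix: "\<And>a b. adj a b \<Longrightarrow> y (a, b) = z * RG adj \<theta> y (a, b)"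
begin

abbreviation S :: "'a \<Rightarrow> real" where "S \<equiv> message_sum adj \<theta> y"

abbreviation x :: "'a \<Rightarrow> 'a \<Rightarrow> real" where "x \<equiv> xe \<theta> y z"

lemma adj_sym: "adj a b \<Longrightarrow> adj b a"
  using graph by (simp add: simple_graph_def)

lemma message_nonneg: "w \<in> nbrs adj u \<Longrightarrow> \<theta> w u * y (w, u) \<ge> 0"
  using \<theta>_pos y_pos adj_sym by (simp add: nbrs_def less_imp_le)

lemma message_sum_nonneg: "S u \<ge> 0"
  unfolding message_sum_def using message_nonneg by (simp add: sum_nonneg)

lemma message_sum_minus:
  assumes "adj u v"
  shows "(\<Sum>w \<in> nbrs adj u - {v}. \<theta> w u * y (w, u)) = S u - \<theta> v u * y (v, u)"
  unfolding message_sum_def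
  using assms finite_nbrs[OF graph] by (simp add: sum_diff1 nbrs_def)

lemma z_div_y:
  assumes "adj u v"
  shows "z / y (u, v) = 1 + S u - \<theta> v u * y (v, u)"
proof -
  have "S u - \<theta> v u * y (v, u) \<ge> 0"
    unfolding message_sum_minus[OF assms, symmetric] using message_nonneg by (intro sum_nonneg) auto
  moreover have "y (u, v) = z / (1 + (S u - \<theta> v u * y (v, u)))"
    using y_fix[OF assms] message_sum_minus[OF assms] by (simp add: RG_def divide_inverse)
  ultimately show ?thesis using z_pos y_pos[OF assms] by (simp add: field_simps)
qed

lemma xe_eq:
  assumes "adj u v"
  shows "x u v = \<theta> v u * y (v, u) / (1 + S u)"
proof -
  have z: "z = (1 + S u - \<theta> v u * y (v, u)) * y (u, v)"
    using z_div_y[OF assms] y_pos[OF assms] by (simp add: field_simps)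
  have "x u v = \<theta> v u * y (v, u) * y (u, v) / ((1 + S u) * y (u, v))"
    unfolding xe_def \<theta>_sym[OF assms] z by (simp add: algebra_simps)
  then show ?thesis using y_pos[OF assms] by simp
qed

lemma one_minus_xe:
  assumes "adj u v"
  shows "1 - x u v = z / (y (u, v) * (1 + S u))"
proof -
  have "1 - x u v = (1 + S u - \<theta> v u * y (v, u)) / (1 + S u)"
    unfolding xe_eq[OF assms] using message_sum_nonneg[of u] by (simp add: field_simps)
  then show ?thesis unfolding z_div_y[OF assms, symmetric] by simp
qed

lemma one_minus_sum_xe: "1 - (\<Sum>w \<in> nbrs adj u. x u w) = 1 / (1 + S u)"
proof -
  have "(\<Sum>w \<in> nbrs adj u. x u w) = (\<Sum>w \<in> nbrs adj u. \<theta> w u * y (w, u) / (1 + S u))"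
    by (rule sum.cong) (auto simp: nbrs_def xe_eq)
  also have "\<dots> = S u / (1 + S u)"
    by (simp add: message_sum_def sum_divide_distrib)
  finally show ?thesis using message_sum_nonneg[of u] by (simp add: field_simps)
qed

lemma xe_sym:
  assumes "adj u v"
  shows "x u v = x v u"
  unfolding xe_def \<theta>_sym[OF assms] by (simp add: mult_ac)

lemma edge_identity:
  assumes "adj u v"
  shows "x u v * (1 - x u v) / z = \<theta> u v * (1 - (\<Sum>w \<in> nbrs adj u. x u w)) * (1 - (\<Sum>w \<in> nbrs adj v. x v w))"
proof -
  have "x u v = \<theta> u v * y (u, v) / (1 + S v)"
    using xe_sym[OF assms] xe_eq[OF adj_sym[OF assms]] by simp
  then have "x u v * (1 - x u v) / z
      = \<theta> u v * y (u, v) / (1 + S v) * (z / (y (u, v) * (1 + S u))) / z"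
    using one_minus_xe[OF assms] by simp
  also have "\<dots> = \<theta> u v * (1 / (1 + S u)) * (1 / (1 + S v))"
  proof -
    have "1 + S u > 0" "1 + S v > 0" using message_sum_nonneg by (simp_all add: add_pos_nonneg)
    then show ?thesis using y_pos[OF assms] z_pos by (simp add: divide_simps)
  qed
  finally show ?thesis by (simp only: one_minus_sum_xe)
qed

end

theorem lemma4p16:
  fixes V :: "'a set" and adj :: "'a \<Rightarrow> 'a \<Rightarrow> bool" and \<theta> :: "'a \<Rightarrow> 'a \<Rightarrow> real"
    and y :: "'a \<times> 'a \<Rightarrow> real" and z :: real and u v :: 'a
  assumes G: "simple_graph V adj"
    and \<theta>_sym: "\<And>a b. adj a b \<Longrightarrow> \<theta> a b = \<theta> b a"
    and \<theta>_pos: "\<And>a b. adj a b \<Longrightarrow> \<theta> a b > 0"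
    and z: "z > 0"
    and y_pos: "\<And>a b. adj a b \<Longrightarrow> y (a, b) > 0"
    and y_fix: "\<And>a b. adj a b \<Longrightarrow> y (a, b) = z * RG adj \<theta> y (a, b)"
    and e: "adj u v"
  shows "xe \<theta> y z u v * (1 - xe \<theta> y z u v) / z =
         \<theta> u v * (1 - (\<Sum>w \<in> nbrs adj u. xe \<theta> y z u w)) * (1 - (\<Sum>w \<in> nbrs adj v. xe \<theta> y z v w))"
proof -
  interpret weighted_fixed_point V adj \<theta> y z
    using G \<theta>_sym \<theta>_pos z y_pos y_fix by unfold_locales
  show ?thesis using edge_identity[OF e] .
qed

end
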